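(* Let $\psi:X\to Y$ be a function between two finite metric spaces such that $\psi(X)$ is $D$-dense in $Y$ for some $D\geq0$. Let $B\subseteq Y$ be nonempty with $|B|\leq|Y|/2$ and $1-N_Y(D)\frac{|\partial_D(B)|}{|B|}\geq\frac12$. Then either $A=\psi^{-1}(B)$ or $A=\psi^{-1}(Y\setminus B)$ satisfies $|A|\leq|X|/2$ and $|A|\geq\frac{1}{2N_Y(D)}|B|$.
   Context: A subset $S\subseteq Y$ is $D$-dense if every point of $Y$ is within distance $D$ of a point of $S$. $N_Y(D)=\sup_{y\in Y}|B(y,D)|$ (closed balls). $\partial_D(B)=\{y\in Y\setminus B: d(y,B)\leq D\}$ is the outer $D$-boundary. *)

theory Defs
  imports "HOL-Analysis.Analysis"
begin

definition dense_in :: "'a set \<Rightarrow> ('a \<Rightarrow> 'a \<Rightarrow> real) \<Rightarrow> real \<Rightarrow> 'a set \<Rightarrow> bool" where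
  "dense_in Y d D S \<longleftrightarrow> S \<subseteq> Y \<and> (\<forall>y\<in>Y. \<exists>s\<in>S. d y s \<le> D)"

definition ball_growth :: "'a set \<Rightarrow> ('a \<Rightarrow> 'a \<Rightarrow> real) \<Rightarrow> real \<Rightarrow> nat" where
  "ball_growth Y d D = Max ((\<lambda>y. card {z\<in>Y. d y z \<le> D}) ` Y)"

text \<open>Outer D-boundary of B in Y (for finite nonempty B, d(y,B) \<le> D iff some b has d y b \<le> D).\<close>
definition outer_boundary :: "'a set \<Rightarrow> ('a \<Rightarrow> 'a \<Rightarrow> real) \<Rightarrow> real \<Rightarrow> 'a set \<Rightarrow> 'a set" where
  "outer_boundary Y d D B = {y \<in> Y - B. \<exists>b\<in>B. d y b \<le> D}"

end

theory Submission
  imports Defs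
begin

text \<open>Every point of Y lies within D of an image point. So B is covered by the D-balls
  around the images of A = \<psi>-preimage of B together with the outer boundary \<partial>B, and
  Y - B - \<partial>B is covered by the D-balls around the images of A' = \<psi>-preimage of Y - B.
  Balls have at most N = N_Y(D) points, hence |B| \<le> N (|A| + |\<partial>B|) and
  |Y - B| \<le> N |A'| + |\<partial>B|. With N |\<partial>B| \<le> |B|/2, N \<ge> 1 and |Y - B| \<ge> |B|
  both give |B| \<le> 2N times the preimage size; as A and A' partition X, one of them has at
  most |X|/2 points.\<close>

lemma card_ball_le_ball_growth:
  assumes "finite Y" "z \<in> Y"
  shows "card {w\<in>Y. d z w \<le> D} \<le> ball_growth Y d D"
  unfolding ball_growth_def using assms by (intro Max_ge) auto

lemma (in Metric_space) ball_growth_ge_1: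
  assumes "finite M" "M \<noteq> {}" "D \<ge> 0"
  shows "1 \<le> ball_growth M d D"
proof -
  obtain z where z: "z \<in> M" using assms(2) by blast
  then have "z \<in> {w\<in>M. d z w \<le> D}" using assms(3) by simp
  then have "1 \<le> card {w\<in>M. d z w \<le> D}"
    using assms(1) by (simp add: Suc_le_eq card_gt_0_iff) blast
  also have "\<dots> \<le> ball_growth M d D" using assms(1) z by (rule card_ball_le_ball_growth)
  finally show ?thesis .
qed

lemma card_le_ball_growth_mult_card_centres:
  assumes "finite Y" "Z \<subseteq> Y" "S \<subseteq> (\<Union>z\<in>Z. {w\<in>Y. d z w \<le> D})"
  shows "card S \<le> ball_growth Y d D * card Z"
proof -
  have "finite Z" using assms(1,2) finite_subset by blast
  have "card S \<le> card (\<Union>z\<in>Z. {w\<in>Y. d z w \<le> D})"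
    using assms \<open>finite Z\<close> by (intro card_mono) auto
  also have "\<dots> \<le> (\<Sum>z\<in>Z. card {w\<in>Y. d z w \<le> D})" using \<open>finite Z\<close> by (rule card_UN_le)
  also have "\<dots> \<le> (\<Sum>z\<in>Z. ball_growth Y d D)"
    using assms(1,2) by (intro sum_mono card_ball_le_ball_growth) auto
  finally show ?thesis by (simp add: mult.commute)
qed

lemma (in Metric_space) dense_image_near:
  assumes "dense_in M d D (\<psi> ` X)" "y \<in> M"
  obtains x where "x \<in> X" "\<psi> x \<in> M" "d (\<psi> x) y \<le> D"
  using assms unfolding dense_in_def by (fastforce simp: commute)

lemma (in Metric_space) card_le_ball_growth_preimage_outer_boundary:
  assumes "finite X" "finite M" "dense_in M d D (\<psi> ` X)" "B \<subseteq> M"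
  shows "card B \<le> ball_growth M d D * (card {x\<in>X. \<psi> x \<in> B} + card (outer_boundary M d D B))"
proof -
  let ?A = "{x\<in>X. \<psi> x \<in> B}" and ?P = "outer_boundary M d D B"
  have "card B \<le> ball_growth M d D * card (\<psi> ` ?A \<union> ?P)"
  proof (rule card_le_ball_growth_mult_card_centres[OF assms(2)])
    show "\<psi> ` ?A \<union> ?P \<subseteq> M" using assms(4) unfolding outer_boundary_def by auto
    show "B \<subseteq> (\<Union>z\<in>\<psi> ` ?A \<union> ?P. {w\<in>M. d z w \<le> D})"
    proof
      fix y assume "y \<in> B"
      then obtain x where x: "x \<in> X" "\<psi> x \<in> M" "d (\<psi> x) y \<le> D"
        using assms(3,4) dense_image_near by blast
      then have "\<psi> x \<in> \<psi> ` ?A \<union> ?P"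
        using \<open>y \<in> B\<close> unfolding outer_boundary_def by auto
      with x \<open>y \<in> B\<close> assms(4) show "y \<in> (\<Union>z\<in>\<psi> ` ?A \<union> ?P. {w\<in>M. d z w \<le> D})" by blast
    qed
  qed
  also have "card (\<psi> ` ?A \<union> ?P) \<le> card (\<psi> ` ?A) + card ?P" by (rule card_Un_le)
  also have "\<dots> \<le> card ?A + card ?P" using assms(1) by (simp add: card_image_le)
  finally show ?thesis by simp
qed

lemma (in Metric_space) card_compl_le_ball_growth_preimage_plus_outer_boundary:
  assumes "finite X" "finite M" "dense_in M d D (\<psi> ` X)"
  shows "card (M - B) \<le> ball_growth M d D * card {x\<in>X. \<psi> x \<in> M - B} + card (outer_boundary M d D B)"
proof -
  let ?A = "{x\<in>X. \<psi> x \<in> M - B}" and ?P = "outer_boundary M d D B"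
  have "card (M - B - ?P) \<le> ball_growth M d D * card (\<psi> ` ?A)"
  proof (rule card_le_ball_growth_mult_card_centres[OF assms(2)])
    show "\<psi> ` ?A \<subseteq> M" by auto
    show "M - B - ?P \<subseteq> (\<Union>z\<in>\<psi> ` ?A. {w\<in>M. d z w \<le> D})"
    proof
      fix y assume y: "y \<in> M - B - ?P"
      then obtain x where x: "x \<in> X" "\<psi> x \<in> M" "d (\<psi> x) y \<le> D"
        using assms(3) dense_image_near by blast
      then have "\<psi> x \<in> \<psi> ` ?A"
        using y unfolding outer_boundary_def by (auto simp: commute)
      with x y show "y \<in> (\<Union>z\<in>\<psi> ` ?A. {w\<in>M. d z w \<le> D})" by blast
    qed
  qed
  also have "\<dots> \<le> ball_growth M d D * card ?A"
    using assms(1) by (simp add: card_image_le)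
  finally have "card (M - B - ?P) \<le> ball_growth M d D * card ?A" .
  moreover have "card (M - B) \<le> card (M - B - ?P) + card ?P"
  proof -
    have "card (M - B) \<le> card (M - B - ?P \<union> ?P)"
      using assms(2) by (intro card_mono) (auto simp: outer_boundary_def)
    also have "\<dots> \<le> card (M - B - ?P) + card ?P" by (rule card_Un_le)
    finally show ?thesis .
  qed
  ultimately show ?thesis by linarith
qed

lemma card_preimage_partition:
  assumes "finite X" "\<psi> \<in> X \<rightarrow> Y"
  shows "card {x\<in>X. \<psi> x \<in> B} + card {x\<in>X. \<psi> x \<in> Y - B} = card X"
proof -
  have "{x\<in>X. \<psi> x \<in> B} \<union> {x\<in>X. \<psi> x \<in> Y - B} = X" using assms(2) by auto
  moreover have "{x\<in>X. \<psi> x \<in> B} \<inter> {x\<in>X. \<psi> x \<in> Y - B} = {}" by blast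
  ultimately show ?thesis using assms(1) by (metis card_Un_disjoint finite_Un)
qed

theorem lemma3p17:
  fixes X :: "'a set" and dX :: "'a \<Rightarrow> 'a \<Rightarrow> real"
    and Y :: "'b set" and dY :: "'b \<Rightarrow> 'b \<Rightarrow> real"
    and \<psi> :: "'a \<Rightarrow> 'b" and D :: real and B :: "'b set"
  assumes "Metric_space X dX" and "Metric_space Y dY"
    and "finite X" and "finite Y"
    and "\<psi> \<in> X \<rightarrow> Y"
    and "D \<ge> 0"
    and "dense_in Y dY D (\<psi> ` X)"
    and "B \<subseteq> Y" and "B \<noteq> {}"
    and "real (card B) \<le> real (card Y) / 2"
    and "1 - real (ball_growth Y dY D) * real (card (outer_boundary Y dY D B)) / real (card B) \<ge> 1/2"
  shows "(let A = {x\<in>X. \<psi> x \<in> B} in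
            real (card A) \<le> real (card X) / 2 \<and>
            real (card A) \<ge> real (card B) / (2 * real (ball_growth Y dY D)))
       \<or> (let A = {x\<in>X. \<psi> x \<in> Y - B} in
            real (card A) \<le> real (card X) / 2 \<and>
            real (card A) \<ge> real (card B) / (2 * real (ball_growth Y dY D)))"
proof -
  interpret Metric_space Y dY by fact
  define N where "N = ball_growth Y dY D"
  define P where "P = outer_boundary Y dY D B"
  define A1 where "A1 = {x\<in>X. \<psi> x \<in> B}"
  define A2 where "A2 = {x\<in>X. \<psi> x \<in> Y - B}"
  have "card B > 0" using assms(4,8,9) by (meson card_gt_0_iff finite_subset)
  then have boundary: "real N * real (card P) \<le> real (card B) / 2"
    using assms(11) unfolding N_def P_def by (simp add: field_simps)
  have "N \<ge> 1" unfolding N_def using ball_growth_ge_1 assms(4,6,8,9) by blast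
  have "real (card B) \<le> real N * (real (card A1) + real (card P))"
    using card_le_ball_growth_preimage_outer_boundary[OF assms(3,4,7,8)]
    unfolding N_def A1_def P_def by (metis of_nat_add of_nat_le_iff of_nat_mult)
  then have A1_large: "real (card B) / (2 * real N) \<le> real (card A1)"
    using boundary \<open>N \<ge> 1\<close> by (simp add: field_simps)
  have "card (Y - B) = card Y - card B" "card B \<le> card Y"
    using assms(4,8) by (auto simp: card_Diff_subset finite_subset card_mono)
  then have "real (card Y) - real (card B) \<le> real N * real (card A2) + real (card P)"
    using card_compl_le_ball_growth_preimage_plus_outer_boundary[OF assms(3,4,7), of B]
    unfolding N_def A2_def P_def by (metis of_nat_add of_nat_diff of_nat_le_iff of_nat_mult)
  then have A2_large: "real (card B) / (2 * real N) \<le> real (card A2)"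
    using boundary \<open>N \<ge> 1\<close> assms(10) mult_le_cancel_right1[of "real (card P)" "real N"]
    by (simp add: field_simps)
  have "card A1 + card A2 = card X"
    unfolding A1_def A2_def using card_preimage_partition assms(3,5) .
  with A1_large A2_large show ?thesis unfolding A1_def A2_def N_def Let_def by linarith
qed

end
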